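(* Let $a,b,d\in\mathbb C$ with $a\notin\mathbb Z$ and $d\notin\{0,-1,-2,\dots\}$. Then, as an identity of formal power series in $x,y$, $${}_1F_1(a;d;x)\,{}_1F_1(b;1-a;y)=\mathrm H_4(a,b;d;x,-y)+\sum_{k=1}^\infty\sum_{l=1}^k\frac{(-1)^{k-l}(k-1)!}{(l-1)!\,l!\,(k-l)!}\,\frac{(b)_k}{(1-a)_k(1-a)_{k-l}(d)_l}\,x^ly^k\,\mathrm H_4(a-k+l,b+k;d+l;x,-y).$$
   Context: Pochhammer symbol: $(\lambda)_k=\Gamma(\lambda+k)/\Gamma(\lambda)$ for every integer $k$ (possibly negative) whenever defined; $(\lambda)_0=1$. ${}_1F_1(a;c;x)=\sum_{k\ge0}\frac{(a)_k}{(c)_k k!}x^k$. Confluent Horn function $\mathrm H_4(a,b;d;x,y)=\sum_{p,q\ge0}\frac{(a)_{p-q}(b)_q}{(d)_p\,p!\,q!}x^py^q$. All functions are regarded as formal power series in $x,y$; the infinite double sum converges in the formal (degree) topology. *)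

theory Defs
  imports "HOL-Analysis.Analysis"
begin

text \<open>Pochhammer symbol with integer index:
  (lam)_k = Gamma(lam+k)/Gamma(lam); for k = -m < 0 this is 1/((lam-m)(lam-m+1)...(lam-1)).\<close>
definition poch_int :: "complex \<Rightarrow> int \<Rightarrow> complex" where
  "poch_int lam k = (if 0 \<le> k then pochhammer lam (nat k)
                     else inverse (pochhammer (lam + of_int k) (nat (- k))))"

text \<open>Formal power series in two variables x, y, represented by their coefficient
  arrays: s p q is the coefficient of x^p y^q.\<close>
type_synonym bfps = "nat \<Rightarrow> nat \<Rightarrow> complex"

definition bmult :: "bfps \<Rightarrow> bfps \<Rightarrow> bfps" where
  "bmult s t = (\<lambda>p q. \<Sum>i\<le>p. \<Sum>j\<le>q. s i j * t (p - i) (q - j))"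

definition ser_x :: "(nat \<Rightarrow> complex) \<Rightarrow> bfps" where
  "ser_x f = (\<lambda>p q. if q = 0 then f p else 0)"

definition ser_y :: "(nat \<Rightarrow> complex) \<Rightarrow> bfps" where
  "ser_y f = (\<lambda>p q. if p = 0 then f q else 0)"

text \<open>Coefficients of 1F1(a;c;t) = sum_k (a)_k/((c)_k k!) t^k.\<close>
definition hyp1F1 :: "complex \<Rightarrow> complex \<Rightarrow> nat \<Rightarrow> complex" where
  "hyp1F1 a c k = pochhammer a k / (pochhammer c k * fact k)"

definition H4 :: "complex \<Rightarrow> complex \<Rightarrow> complex \<Rightarrow> bfps" where
  "H4 a b d = (\<lambda>p q. poch_int a (int p - int q) * pochhammer b q
                      / (pochhammer d p * fact p * fact q))"

definition neg_y :: "bfps \<Rightarrow> bfps" where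
  "neg_y s = (\<lambda>p q. (-1) ^ q * s p q)"

definition mono_mult :: "nat \<Rightarrow> nat \<Rightarrow> bfps \<Rightarrow> bfps" where
  "mono_mult l k s = (\<lambda>p q. if l \<le> p \<and> k \<le> q then s (p - l) (q - k) else 0)"

definition bsum :: "('i \<Rightarrow> bfps) \<Rightarrow> 'i set \<Rightarrow> bfps" where
  "bsum F I = (\<lambda>p q. \<Sum>\<^sub>\<infinity>i\<in>I. F i p q)"

definition badd :: "bfps \<Rightarrow> bfps \<Rightarrow> bfps" where
  "badd s t = (\<lambda>p q. s p q + t p q)"

definition bscale :: "complex \<Rightarrow> bfps \<Rightarrow> bfps" where
  "bscale c s = (\<lambda>p q. c * s p q)"

end

theory Submission imports Defs begin

text \<open>Compare the coefficients of \<open>x^p y^q\<close>. Written as quotients of Gamma values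
  (legitimate because \<open>a \<notin> \<int>\<close>), the Pochhammer symbols of the (k, l) correction term
  recombine into the common factor \<open>(b)\<^sub>q (a)\<^sub>p\<^sub>-\<^sub>q / ((d)\<^sub>p p! q!)\<close> of the \<open>H4\<close> term times a
  rational factor in k, l, p, q. The sum over l of these factors collapses by Vandermonde's
  identity to \<open>(p)\<^sub>k / (k! p!)\<close>, so the right-hand side becomes the common factor times the
  alternating Chu-Vandermonde sum
  \<open>\<Sum>\<^sub>k (-1)^(q-k) (q choose k) (p)\<^sub>k / (1-a)\<^sub>k = (a+p-q)\<^sub>q / (1-a)\<^sub>q\<close>;
  finally \<open>(a)\<^sub>p\<^sub>-\<^sub>q (a+p-q)\<^sub>q = (a)\<^sub>p\<close>.\<close>

lemma Gamma_add_of_int_nonzero: "(a::complex) \<notin> \<int> \<Longrightarrow> Gamma (a + of_int k) \<noteq> 0"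
  by (intro Gamma_nonzero) (use nonpos_Ints_subset_Ints in auto)

lemma poch_int_eq_Gamma:
  assumes "(a::complex) \<notin> \<int>"
  shows "poch_int a k = Gamma (a + of_int k) / Gamma a"
proof (cases "0 \<le> k")
  case True
  then obtain n where "k = int n" by (metis nonneg_eq_int)
  moreover have "a \<notin> \<int>\<^sub>\<le>\<^sub>0" using assms nonpos_Ints_subset_Ints by auto
  ultimately show ?thesis by (simp add: poch_int_def pochhammer_Gamma)
next
  case False
  define m where "m = nat (- k)"
  then have k: "k = - int m" using False by simp
  have "a + of_int k \<notin> \<int>\<^sub>\<le>\<^sub>0" using assms nonpos_Ints_subset_Ints by auto
  then have "pochhammer (a + of_int k) m = Gamma a / Gamma (a + of_int k)"
    using pochhammer_Gamma[of "a + of_int k" m] k by simp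
  with False show ?thesis by (simp add: poch_int_def m_def)
qed

lemma pochhammer_one_minus_eq_Gamma:
  assumes "(a::complex) \<notin> \<int>"
  shows "pochhammer (1 - a) j = (-1)^j * Gamma a / Gamma (a - of_nat j)"
proof -
  have "pochhammer (1 - a) j = (-1)^j * pochhammer (a - of_nat j) j"
    using pochhammer_minus[of "a - 1" j] by (simp add: algebra_simps)
  moreover have "a - of_nat j \<notin> \<int>\<^sub>\<le>\<^sub>0" using assms nonpos_Ints_subset_Ints by auto
  ultimately show ?thesis by (simp add: pochhammer_Gamma)
qed

lemma pochhammer_one_minus_nonzero: "(a::complex) \<notin> \<int> \<Longrightarrow> pochhammer (1 - a) j \<noteq> 0"
  using Gamma_add_of_int_nonzero[of a 0] Gamma_add_of_int_nonzero[of a "- int j"]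
  by (simp add: pochhammer_one_minus_eq_Gamma)

definition chu_vandermonde_sum :: "'a::field_char_0 \<Rightarrow> 'a \<Rightarrow> nat \<Rightarrow> 'a" where
  "chu_vandermonde_sum c x q =
     (\<Sum>k\<le>q. (-1)^(q-k) * of_nat (q choose k) * pochhammer x k / pochhammer c k)"

lemma chu_vandermonde_sum_Suc:
  assumes "c \<noteq> 0"
  shows "chu_vandermonde_sum c x (Suc q) =
           - chu_vandermonde_sum c x q + x / c * chu_vandermonde_sum (c + 1) (x + 1) q"
proof -
  define t where "t = (\<lambda>i k. (-1)^(Suc q - k) * of_nat (q choose i) * pochhammer x k / pochhammer c k)"
  have "chu_vandermonde_sum c x (Suc q) =
          (\<Sum>k\<le>Suc q. t k k) + (\<Sum>k\<le>Suc q. if k = 0 then 0 else t (k - 1) k)"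
    unfolding chu_vandermonde_sum_def t_def sum.distrib[symmetric]
    by (intro sum.cong refl, rename_tac k, case_tac k)
      (simp_all add: add_divide_distrib distrib_left distrib_right)
  moreover have "(\<Sum>k\<le>Suc q. t k k) = - chu_vandermonde_sum c x q"
    unfolding chu_vandermonde_sum_def t_def sum.atMost_Suc
    by (auto simp add: sum_negf[symmetric] Suc_diff_le intro!: sum.cong)
  moreover have "(\<Sum>k\<le>Suc q. if k = 0 then 0 else t (k - 1) k) =
                   x / c * chu_vandermonde_sum (c + 1) (x + 1) q"
    unfolding chu_vandermonde_sum_def t_def sum.atMost_Suc_shift sum_distrib_left
    using assms by (auto intro!: sum.cong simp: pochhammer_rec field_simps)
  ultimately show ?thesis by simp
qed

lemma pochhammer_mult_chu_vandermonde_sum: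
  assumes "\<forall>m::nat. c \<noteq> - of_nat m"
  shows "pochhammer c q * chu_vandermonde_sum c x q = (-1)^q * pochhammer (c - x) q"
  using assms
proof (induction q arbitrary: c x)
  case 0
  then show ?case by (simp add: chu_vandermonde_sum_def)
next
  case (Suc q)
  have "c \<noteq> 0" using Suc.prems[rule_format, of 0] by simp
  have "\<forall>m::nat. c + 1 \<noteq> - of_nat m"
  proof (intro allI notI)
    fix m :: nat
    assume "c + 1 = - of_nat m"
    then have "c = - of_nat (Suc m)" by (simp add: algebra_simps eq_neg_iff_add_eq_0)
    with Suc.prems show False by blast
  qed
  from Suc.IH[OF this, of "x + 1"] Suc.IH[OF Suc.prems, of x]
  have "pochhammer (c + 1) q * chu_vandermonde_sum (c + 1) (x + 1) q = (-1)^q * pochhammer (c - x) q"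
    and "pochhammer c q * chu_vandermonde_sum c x q = (-1)^q * pochhammer (c - x) q"
    by simp_all
  moreover have "pochhammer c (Suc q) * chu_vandermonde_sum c x (Suc q) =
      - (c + of_nat q) * (pochhammer c q * chu_vandermonde_sum c x q)
      + x * (pochhammer (c + 1) q * chu_vandermonde_sum (c + 1) (x + 1) q)"
  proof -
    have neg: "pochhammer c (Suc q) * (- chu_vandermonde_sum c x q) =
            - (c + of_nat q) * (pochhammer c q * chu_vandermonde_sum c x q)"
      by (simp add: pochhammer_Suc algebra_simps)
    have shift: "pochhammer c (Suc q) * (x / c * chu_vandermonde_sum (c + 1) (x + 1) q) =
                     x * (pochhammer (c + 1) q * chu_vandermonde_sum (c + 1) (x + 1) q)"
      using \<open>c \<noteq> 0\<close> by (simp add: pochhammer_rec)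
    show ?thesis
      by (simp only: chu_vandermonde_sum_Suc[OF \<open>c \<noteq> 0\<close>] distrib_left neg shift)
  qed
  ultimately show ?case by (simp add: pochhammer_Suc algebra_simps)
qed

lemma sum_choose_pred_mult_choose:
  assumes "1 \<le> k"
  shows "(\<Sum>l=1..k. ((k - 1) choose (l - 1)) * (p choose l)) = (p + (k - 1)) choose k"
proof -
  have "(p + (k - 1)) choose k = (\<Sum>l\<le>k. (p choose l) * ((k - 1) choose (k - l)))"
    by (rule vandermonde[symmetric])
  also have "\<dots> = (\<Sum>l=1..k. (p choose l) * ((k - 1) choose (k - l)))"
    using assms by (intro sum.mono_neutral_right) auto
  also have "\<dots> = (\<Sum>l=1..k. ((k - 1) choose (l - 1)) * (p choose l))"
    by (intro sum.cong refl, subst binomial_symmetric) (auto simp: Suc_diff_le)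
  finally show ?thesis by simp
qed

lemma sum_fact_quotients_eq_pochhammer:
  assumes "1 \<le> k"
  shows "(\<Sum>l=1..k. if l \<le> p then fact (k - 1) / (fact (l - 1) * fact l * fact (k - l) * fact (p - l))
                     else 0) = (pochhammer (of_nat p) k / (fact k * fact p) :: 'a::field_char_0)"
proof -
  have "(\<Sum>l=1..k. if l \<le> p then fact (k - 1) / (fact (l - 1) * fact l * fact (k - l) * fact (p - l))
                  else 0) = (\<Sum>l=1..k. of_nat (((k - 1) choose (l - 1)) * (p choose l)) / (fact p :: 'a))"
  proof (intro sum.cong refl)
    fix l assume "l \<in> {1..k}"
    then show "(if l \<le> p then fact (k - 1) / (fact (l - 1) * fact l * fact (k - l) * fact (p - l)) else 0)
      = of_nat (((k - 1) choose (l - 1)) * (p choose l)) / (fact p :: 'a)"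
      by (auto simp: binomial_fact of_nat_diff field_simps)
  qed
  also have "\<dots> = of_nat ((p + (k - 1)) choose k) / fact p"
    by (simp only: of_nat_sum[symmetric] sum_divide_distrib[symmetric]
          sum_choose_pred_mult_choose[OF assms])
  also have "(of_nat ((p + (k - 1)) choose k) :: 'a) = pochhammer (of_nat p) k / fact k"
    using assms by (simp add: binomial_gbinomial gbinomial_pochhammer' of_nat_diff)
  finally show ?thesis by simp
qed

lemma bmult_ser_x_ser_y: "bmult (ser_x f) (ser_y g) p q = f p * g q"
proof -
  have "bmult (ser_x f) (ser_y g) p q
          = (\<Sum>i\<le>p. \<Sum>j\<le>q. if j = 0 then (if i = p then f p * g q else 0) else 0)"
    unfolding bmult_def ser_x_def ser_y_def by (intro sum.cong refl) auto
  also have "\<dots> = (\<Sum>i\<le>p. if i = p then f p * g q else 0)"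
    by (intro sum.cong refl) (simp only: sum.delta sum.delta' finite_atMost atMost_iff le0 if_True)
  also have "\<dots> = f p * g q"
    by simp
  finally show ?thesis .
qed

lemma infsum_triangle_eq_sum:
  fixes T :: "nat \<Rightarrow> nat \<Rightarrow> 'a::{comm_monoid_add, t2_space}"
  assumes "\<And>k l. q < k \<Longrightarrow> T k l = 0"
  shows "(\<Sum>\<^sub>\<infinity>(k, l)\<in>{(k, l). 1 \<le> l \<and> l \<le> k}. T k l) = (\<Sum>k=1..q. \<Sum>l=1..k. T k l)"
proof -
  have "(\<Sum>\<^sub>\<infinity>(k, l)\<in>{(k, l). 1 \<le> l \<and> l \<le> k}. T k l)
          = (\<Sum>\<^sub>\<infinity>(k, l)\<in>Sigma {1..q} (\<lambda>k. {1..k}). T k l)"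
    by (rule infsum_cong_neutral) (auto simp: not_le intro!: assms)
  also have "\<dots> = (\<Sum>k=1..q. \<Sum>l=1..k. T k l)"
    by (simp add: finite_SigmaI sum.Sigma split_beta)
  finally show ?thesis .
qed

definition H4_correction_weight ::
  "complex \<Rightarrow> complex \<Rightarrow> complex \<Rightarrow> nat \<Rightarrow> nat \<Rightarrow> complex" where
  "H4_correction_weight a b d k l =
     (-1) ^ (k - l) * fact (k - 1) / (fact (l - 1) * fact l * fact (k - l)) * pochhammer b k
     / (pochhammer (1 - a) k * pochhammer (1 - a) (k - l) * pochhammer d l)"

definition H4_correction :: "complex \<Rightarrow> complex \<Rightarrow> complex \<Rightarrow> bfps" where
  "H4_correction a b d =
     bsum (\<lambda>(k, l). bscale (H4_correction_weight a b d k l)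
       (mono_mult l k (neg_y (H4 (a - of_nat k + of_nat l) (b + of_nat k) (d + of_nat l)))))
       {(k, l). 1 \<le> l \<and> l \<le> k}"

lemma H4_correction_term:
  fixes a b d :: complex
  assumes a: "a \<notin> \<int>" and d: "\<forall>n::nat. d \<noteq> - of_nat n"
    and kl: "1 \<le> l" "l \<le> k" "k \<le> q" "l \<le> p"
  shows "H4_correction_weight a b d k l
           * ((-1)^(q - k) * H4 (a - of_nat k + of_nat l) (b + of_nat k) (d + of_nat l) (p - l) (q - k))
         = pochhammer b q / pochhammer d p * poch_int a (int p - int q)
           * ((-1)^(q - k) / (pochhammer (1 - a) k * fact (q - k))
           * (fact (k - 1) / (fact (l - 1) * fact l * fact (k - l) * fact (p - l))))"
proof -
  define j where "j = k - l"
  define n where "n = int p - int q"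
  have parameter: "a - of_nat k + of_nat l = a + of_int (- int j)"
    and index: "int (p - l) - int (q - k) = n + int j"
    using kl unfolding j_def n_def by (simp_all add: of_nat_diff)
  have shifted: "poch_int (a - of_nat k + of_nat l) (int (p - l) - int (q - k))
                   = Gamma (a + of_int n) / Gamma (a - of_nat j)"
    unfolding parameter index using poch_int_eq_Gamma[of "a + of_int (- int j)" "n + int j"] a
    by simp
  have "pochhammer b q = pochhammer b k * pochhammer (b + of_nat k) (q - k)"
    and "pochhammer d p = pochhammer d l * pochhammer (d + of_nat l) (p - l)"
    using kl by (simp_all add: pochhammer_product)
  moreover have "pochhammer d p \<noteq> 0" "pochhammer (1 - a) k \<noteq> 0"
    using d pochhammer_one_minus_nonzero[OF a] by (auto simp: pochhammer_eq_0_iff)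
  moreover have "Gamma a \<noteq> 0" "Gamma (a - of_nat j) \<noteq> 0"
    using Gamma_add_of_int_nonzero[OF a, of 0] Gamma_add_of_int_nonzero[OF a, of "- int j"] by simp_all
  moreover have "(-1)^j * (-1)^j = (1::complex)" by (simp flip: power_add)
  ultimately show ?thesis
    unfolding H4_correction_weight_def H4_def shifted j_def[symmetric] n_def[symmetric]
      pochhammer_one_minus_eq_Gamma[OF a] poch_int_eq_Gamma[OF a]
    by (simp add: field_simps)
qed

lemma H4_correction_coeff:
  fixes a b d :: complex
  assumes a: "a \<notin> \<int>" and d: "\<forall>n::nat. d \<noteq> - of_nat n"
  shows "H4_correction a b d p q =
           pochhammer b q / pochhammer d p * poch_int a (int p - int q) / (fact p * fact q)
           * (\<Sum>k=1..q. (-1)^(q - k) * of_nat (q choose k) * pochhammer (of_nat p) k / pochhammer (1 - a) k)"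
proof -
  define A where "A = pochhammer b q / pochhammer d p * poch_int a (int p - int q)"
  define T where "T = (\<lambda>k l. H4_correction_weight a b d k l * (if l \<le> p \<and> k \<le> q then (-1)^(q - k)
          * H4 (a - of_nat k + of_nat l) (b + of_nat k) (d + of_nat l) (p - l) (q - k) else 0))"
  have "H4_correction a b d p q = (\<Sum>\<^sub>\<infinity>(k, l)\<in>{(k, l). 1 \<le> l \<and> l \<le> k}. T k l)"
    unfolding H4_correction_def bsum_def bscale_def mono_mult_def neg_y_def T_def
    by (intro infsum_cong) auto
  also have "\<dots> = (\<Sum>k=1..q. \<Sum>l=1..k. T k l)"
    by (rule infsum_triangle_eq_sum) (simp add: T_def)
  also have "\<dots> = (\<Sum>k=1..q. A / (fact p * fact q)
                   * ((-1)^(q - k) * of_nat (q choose k) * pochhammer (of_nat p) k / pochhammer (1 - a) k))"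
  proof (intro sum.cong refl)
    fix k assume k: "k \<in> {1..q}"
    have "(\<Sum>l=1..k. T k l) = (\<Sum>l=1..k. A * ((-1)^(q - k) / (pochhammer (1 - a) k * fact (q - k)))
            * (if l \<le> p then fact (k - 1) / (fact (l - 1) * fact l * fact (k - l) * fact (p - l)) else 0))"
      using k H4_correction_term[OF a d, of l k q p b for l]
      by (intro sum.cong refl) (auto simp: T_def A_def mult.assoc)
    also have "\<dots> = A * ((-1)^(q - k) / (pochhammer (1 - a) k * fact (q - k)))
                     * (pochhammer (of_nat p) k / (fact k * fact p))"
      using k unfolding sum_distrib_left[symmetric]
      by (subst sum_fact_quotients_eq_pochhammer) simp_all
    also have "\<dots> = A / (fact p * fact q)
                     * ((-1)^(q - k) * of_nat (q choose k) * pochhammer (of_nat p) k / pochhammer (1 - a) k)"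
      using k pochhammer_one_minus_nonzero[OF a, of k] by (simp add: binomial_fact field_simps)
    finally show "(\<Sum>l=1..k. T k l) = \<dots>" .
  qed
  finally show ?thesis by (simp add: A_def sum_distrib_left)
qed

lemma neg_y_H4_add_H4_correction:
  fixes a b d :: complex
  assumes a: "a \<notin> \<int>" and d: "\<forall>n::nat. d \<noteq> - of_nat n"
  shows "badd (neg_y (H4 a b d)) (H4_correction a b d) p q =
           pochhammer b q / pochhammer d p * poch_int a (int p - int q) / (fact p * fact q)
           * chu_vandermonde_sum (1 - a) (of_nat p) q"
proof -
  have "{..q} = insert 0 {1..q}" by auto
  then have "chu_vandermonde_sum (1 - a) (of_nat p) q = (-1)^q
     + (\<Sum>k=1..q. (-1)^(q - k) * of_nat (q choose k) * pochhammer (of_nat p) k / pochhammer (1 - a) k)"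
    unfolding chu_vandermonde_sum_def by simp
  then show ?thesis
    unfolding badd_def neg_y_def H4_correction_coeff[OF a d]
    by (simp add: H4_def distrib_left field_simps)
qed

lemma H4_coeff_mult_chu_vandermonde_sum:
  fixes a b d :: complex
  assumes a: "a \<notin> \<int>" and d: "\<forall>n::nat. d \<noteq> - of_nat n"
  shows "pochhammer b q / pochhammer d p * poch_int a (int p - int q) / (fact p * fact q)
           * chu_vandermonde_sum (1 - a) (of_nat p) q = hyp1F1 a d p * hyp1F1 b (1 - a) q"
proof -
  define n where "n = int p - int q"
  have "\<forall>m::nat. 1 - a \<noteq> - of_nat m"
    using pochhammer_one_minus_nonzero[OF a] by (auto simp: pochhammer_eq_0_iff)
  from pochhammer_mult_chu_vandermonde_sum[OF this, of q "of_nat p"]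
  have "pochhammer (1 - a) q * chu_vandermonde_sum (1 - a) (of_nat p) q
          = (-1)^q * pochhammer (1 - (a + of_nat p)) q"
    by (simp add: algebra_simps)
  also have "pochhammer (1 - (a + of_nat p)) q = (-1)^q * Gamma (a + of_nat p) / Gamma (a + of_int n)"
    using pochhammer_one_minus_eq_Gamma[of "a + of_nat p" q] a unfolding n_def
    by (simp add: add_diff_eq)
  finally have chu: "chu_vandermonde_sum (1 - a) (of_nat p) q
                       = Gamma (a + of_nat p) / (Gamma (a + of_int n) * pochhammer (1 - a) q)"
    using pochhammer_one_minus_nonzero[OF a, of q] Gamma_add_of_int_nonzero[OF a, of n]
    by (simp add: field_simps flip: power_add)
  have "pochhammer a p = Gamma (a + of_nat p) / Gamma a"
    using poch_int_eq_Gamma[OF a, of "int p"] by (simp add: poch_int_def)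
  moreover have "pochhammer d p \<noteq> 0"
    using d by (auto simp: pochhammer_eq_0_iff)
  moreover have "Gamma a \<noteq> 0"
    using Gamma_add_of_int_nonzero[OF a, of 0] by simp
  ultimately show ?thesis
    using Gamma_add_of_int_nonzero[OF a, of n] pochhammer_one_minus_nonzero[OF a, of q]
    unfolding chu n_def[symmetric] poch_int_eq_Gamma[OF a] hyp1F1_def
    by (simp add: field_simps)
qed

theorem mainTheorem9:
  fixes a b d :: complex
  assumes ha: "a \<notin> \<int>"
    and hd: "\<forall>n::nat. d \<noteq> - of_nat n"
  shows "bmult (ser_x (hyp1F1 a d)) (ser_y (hyp1F1 b (1 - a))) =
    badd (neg_y (H4 a b d))
      (bsum (\<lambda>(k, l). bscale
              ((-1) ^ (k - l) * fact (k - 1) / (fact (l - 1) * fact l * fact (k - l))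
               * pochhammer b k
               / (pochhammer (1 - a) k * pochhammer (1 - a) (k - l) * pochhammer d l))
              (mono_mult l k (neg_y (H4 (a - of_nat k + of_nat l) (b + of_nat k) (d + of_nat l)))))
        {(k, l). 1 \<le> l \<and> l \<le> k})"
proof -
  have "bmult (ser_x (hyp1F1 a d)) (ser_y (hyp1F1 b (1 - a))) p q
          = badd (neg_y (H4 a b d)) (H4_correction a b d) p q" for p q
    by (simp only: bmult_ser_x_ser_y neg_y_H4_add_H4_correction[OF ha hd]
          H4_coeff_mult_chu_vandermonde_sum[OF ha hd])
  then show ?thesis
    by (simp add: fun_eq_iff H4_correction_def H4_correction_weight_def)
qed

end
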